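(* Let $k$ be a field and let $X$ be a $\mathcal{T}$-space. Assume that there exist $V_n\in\mathcal{T}$, $n\in\mathbb{N}$, such that $\{V_n\}_{n\in\mathbb{N}}$ is a covering of $X$ in the site $X_{\mathcal{T}_{loc}}$, i.e. for every $W\in\mathcal{T}$ finitely many of the $V_n$ cover $W$. Let $F\in\mathrm{Mod}(k_\mathcal{T})$. Then $F$ is $\mathcal{T}$-flabby if and only if the restriction $\Gamma(X;F)\to\Gamma(U;F)$ is surjective for every $U\in\mathcal{T}_{loc}$.
   Context: Let $X$ be a topological space and $\mathcal{T}$ a family of open subsets of $X$. A $\mathcal{T}$-subset of $X$ is a finite Boolean combination of elements of $\mathcal{T}$; a $\mathcal{T}$-connected subset is a $\mathcal{T}$-subset which is not the disjoint union of two proper $\mathcal{T}$-subsets that are both open and closed in it. $X$ is a $\mathcal{T}$-space if (i) $\mathcal{T}$ is a basis of the topology of $X$ and $\emptyset\in\mathcal{T}$; (ii) $\mathcal{T}$ is closed under finite unions and finite intersections; (iii) every $U\in\mathcal{T}$ has finitely many $\mathcal{T}$-connected components. $X_\mathcal{T}$ is the site whose underlying category is $\mathcal{T}$ (morphisms are inclusions), a family $\{U_i\}\subset\mathcal{T}$ of subsets of $U\in\mathcal{T}$ being a covering of $U$ iff it admits a finite subfamily whose union is $U$; $\mathrm{Mod}(k_\mathcal{T})$ is the category of sheaves of $k$-vector spaces on $X_\mathcal{T}$. $F\in\mathrm{Mod}(k_\mathcal{T})$ is $\mathcal{T}$-flabby if for all $U,V\in\mathcal{T}$ with $U\subseteq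 V$ the restriction $\Gamma(V;F)\to\Gamma(U;F)$ is surjective. Let $\mathcal{T}_{loc}=\{U\subseteq X\text{ open}: U\cap W\in\mathcal{T}\text{ for every }W\in\mathcal{T}\}$ (note $X\in\mathcal{T}_{loc}$). $X_{\mathcal{T}_{loc}}$ is the site on $\mathcal{T}_{loc}$ where $\{U_i\}\subset\mathcal{T}_{loc}$ covers $U\in\mathcal{T}_{loc}$ iff for every $V\in\mathcal{T}$ a finite subfamily covers $U\cap V$. Every $F\in\mathrm{Mod}(k_\mathcal{T})$ extends uniquely to a sheaf on $X_{\mathcal{T}_{loc}}$, and for $U\in\mathcal{T}_{loc}$ one sets $\Gamma(U;F)=\varprojlim_{V\in\mathcal{T}}\Gamma(U\cap V;F)$. *)

theory Defs
  imports "HOL-Analysis.Abstract_Topology" "HOL-Algebra.Module"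
begin

inductive_set T_subsets :: "'a topology \<Rightarrow> 'a set set \<Rightarrow> 'a set set"
  for X :: "'a topology" and T :: "'a set set" where
  basic: "A \<in> T \<Longrightarrow> A \<in> T_subsets X T"
| compl: "A \<in> T_subsets X T \<Longrightarrow> topspace X - A \<in> T_subsets X T"
| union: "A \<in> T_subsets X T \<Longrightarrow> B \<in> T_subsets X T \<Longrightarrow> A \<union> B \<in> T_subsets X T"
| inter: "A \<in> T_subsets X T \<Longrightarrow> B \<in> T_subsets X T \<Longrightarrow> A \<inter> B \<in> T_subsets X T"

definition T_connected :: "'a topology \<Rightarrow> 'a set set \<Rightarrow> 'a set \<Rightarrow> bool" where
  "T_connected X T A \<longleftrightarrow> A \<in> T_subsets X T \<and>
     \<not> (\<exists>B C. B \<in> T_subsets X T \<and> C \<in> T_subsets X T \<and> B \<noteq> A \<and> C \<noteq> A \<and>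
            B \<inter> C = {} \<and> B \<union> C = A \<and>
            openin (subtopology X A) B \<and> closedin (subtopology X A) B \<and>
            openin (subtopology X A) C \<and> closedin (subtopology X A) C)"

definition T_components :: "'a topology \<Rightarrow> 'a set set \<Rightarrow> 'a set \<Rightarrow> 'a set set" where
  "T_components X T U = {C. C \<noteq> {} \<and> C \<subseteq> U \<and> T_connected X T C \<and>
      (\<forall>D. D \<subseteq> U \<and> T_connected X T D \<and> C \<subseteq> D \<longrightarrow> D = C)}"

definition T_space :: "'a topology \<Rightarrow> 'a set set \<Rightarrow> bool" where
  "T_space X T \<longleftrightarrow>
     (\<forall>U\<in>T. openin X U) \<and>
     (\<forall>W. openin X W \<longrightarrow> (\<forall>x\<in>W. \<exists>U\<in>T. x \<in> U \<and> U \<subseteq> W)) \<and>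
     {} \<in> T \<and>
     (\<forall>U\<in>T. \<forall>V\<in>T. U \<union> V \<in> T \<and> U \<inter> V \<in> T) \<and>
     (\<forall>U\<in>T. finite (T_components X T U))"

definition K_linear :: "('k, 'r) ring_scheme \<Rightarrow> ('k, 'v) module \<Rightarrow> ('k, 'v) module \<Rightarrow> ('v \<Rightarrow> 'v) \<Rightarrow> bool" where
  "K_linear K M N f \<longleftrightarrow>
     (\<forall>x\<in>carrier M. f x \<in> carrier N) \<and>
     (\<forall>x\<in>carrier M. \<forall>y\<in>carrier M. f (x \<oplus>\<^bsub>M\<^esub> y) = f x \<oplus>\<^bsub>N\<^esub> f y) \<and>
     (\<forall>a\<in>carrier K. \<forall>x\<in>carrier M. f (a \<odot>\<^bsub>M\<^esub> x) = a \<odot>\<^bsub>N\<^esub> f x)"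

definition T_presheaf :: "'a set set \<Rightarrow> ('k, 'r) ring_scheme \<Rightarrow> ('a set \<Rightarrow> ('k, 'v) module)
    \<Rightarrow> ('a set \<Rightarrow> 'a set \<Rightarrow> 'v \<Rightarrow> 'v) \<Rightarrow> bool" where
  "T_presheaf T K F res \<longleftrightarrow>
     (\<forall>U\<in>T. module K (F U)) \<and>
     (\<forall>U\<in>T. \<forall>V\<in>T. U \<subseteq> V \<longrightarrow> K_linear K (F V) (F U) (res V U)) \<and>
     (\<forall>U\<in>T. \<forall>s\<in>carrier (F U). res U U s = s) \<and>
     (\<forall>U\<in>T. \<forall>V\<in>T. \<forall>W\<in>T. U \<subseteq> V \<longrightarrow> V \<subseteq> W \<longrightarrow>
        (\<forall>s\<in>carrier (F W). res V U (res W V s) = res W U s))"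

definition T_covering :: "'a set set \<Rightarrow> 'a set set \<Rightarrow> 'a set \<Rightarrow> bool" where
  "T_covering T \<U> U \<longleftrightarrow> \<U> \<subseteq> T \<and> (\<forall>W\<in>\<U>. W \<subseteq> U) \<and>
     (\<exists>\<V>. \<V> \<subseteq> \<U> \<and> finite \<V> \<and> \<Union>\<V> = U)"

definition T_sheaf :: "'a set set \<Rightarrow> ('k, 'r) ring_scheme \<Rightarrow> ('a set \<Rightarrow> ('k, 'v) module)
    \<Rightarrow> ('a set \<Rightarrow> 'a set \<Rightarrow> 'v \<Rightarrow> 'v) \<Rightarrow> bool" where
  "T_sheaf T K F res \<longleftrightarrow> T_presheaf T K F res \<and>
     (\<forall>U\<in>T. \<forall>\<U>. T_covering T \<U> U \<longrightarrow>
        (\<forall>s\<in>carrier (F U). \<forall>t\<in>carrier (F U).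
            (\<forall>W\<in>\<U>. res U W s = res U W t) \<longrightarrow> s = t) \<and>
        (\<forall>f. (\<forall>W\<in>\<U>. f W \<in> carrier (F W)) \<and>
             (\<forall>W1\<in>\<U>. \<forall>W2\<in>\<U>. res W1 (W1 \<inter> W2) (f W1) = res W2 (W1 \<inter> W2) (f W2)) \<longrightarrow>
             (\<exists>s\<in>carrier (F U). \<forall>W\<in>\<U>. res U W s = f W)))"

definition T_flabby :: "'a set set \<Rightarrow> ('a set \<Rightarrow> ('k, 'v) module)
    \<Rightarrow> ('a set \<Rightarrow> 'a set \<Rightarrow> 'v \<Rightarrow> 'v) \<Rightarrow> bool" where
  "T_flabby T F res \<longleftrightarrow>
     (\<forall>U\<in>T. \<forall>V\<in>T. U \<subseteq> V \<longrightarrow> res V U ` carrier (F V) = carrier (F U))"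

definition T_loc :: "'a topology \<Rightarrow> 'a set set \<Rightarrow> 'a set set" where
  "T_loc X T = {U. openin X U \<and> (\<forall>W\<in>T. U \<inter> W \<in> T)}"

text \<open>Gamma(U;F) = inverse limit over V in T of Gamma(U \<inter> V; F), realised as the set of
  compatible families (indexed by V in T).\<close>
definition Gamma_loc :: "'a set set \<Rightarrow> ('a set \<Rightarrow> ('k, 'v) module)
    \<Rightarrow> ('a set \<Rightarrow> 'a set \<Rightarrow> 'v \<Rightarrow> 'v) \<Rightarrow> 'a set \<Rightarrow> ('a set \<Rightarrow> 'v) set" where
  "Gamma_loc T F res U = {f.
     (\<forall>V\<in>T. f V \<in> carrier (F (U \<inter> V))) \<and>
     (\<forall>V\<in>T. \<forall>V'\<in>T. V \<subseteq> V' \<longrightarrow> res (U \<inter> V') (U \<inter> V) (f V') = f V)}"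

definition Gamma_res_surj :: "'a set set \<Rightarrow> ('a set \<Rightarrow> ('k, 'v) module)
    \<Rightarrow> ('a set \<Rightarrow> 'a set \<Rightarrow> 'v \<Rightarrow> 'v) \<Rightarrow> 'a set \<Rightarrow> 'a set \<Rightarrow> bool" where
  "Gamma_res_surj T F res U U' \<longleftrightarrow>
     (\<forall>f\<in>Gamma_loc T F res U'. \<exists>g\<in>Gamma_loc T F res U.
        \<forall>V\<in>T. res (U \<inter> V) (U' \<inter> V) (g V) = f V)"

end

theory Submission
  imports Defs
begin

text \<open>Flabby implies extension from every \<open>U \<in> T_loc\<close>: exhaust \<open>X\<close> by the increasing
  sequence \<open>W\<^sub>n = V\<^sub>0 \<union> \<dots> \<union> V\<^sub>n\<close> of members of \<open>T\<close>. Given a section \<open>f\<close> over \<open>U\<close>, build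
  inductively compatible sections \<open>s\<^sub>n\<close> over \<open>W\<^sub>n\<close> extending \<open>f\<close> on \<open>U \<inter> W\<^sub>n\<close>: glue
  \<open>s\<^sub>n\<close> with \<open>f\<close> on \<open>W\<^sub>n \<union> (U \<inter> W\<^sub>n\<^sub>+\<^sub>1)\<close> and extend to \<open>W\<^sub>n\<^sub>+\<^sub>1\<close> by flabbiness. Since each
  member of \<open>T\<close> lies in some \<open>W\<^sub>n\<close>, the \<open>s\<^sub>n\<close> define a global section.
  Conversely every \<open>U \<in> T\<close> belongs to \<open>T_loc\<close>, and there the surjectivity of
  \<open>\<Gamma>(X;F) \<rightarrow> \<Gamma>(U;F)\<close> factors through \<open>\<Gamma>(V;F) \<rightarrow> \<Gamma>(U;F)\<close> for any \<open>V \<supseteq> U\<close> in \<open>T\<close>.\<close>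

lemma T_presheaf_res_carrier:
  assumes "T_presheaf T K F res" "U \<in> T" "V \<in> T" "U \<subseteq> V" "s \<in> carrier (F V)"
  shows "res V U s \<in> carrier (F U)"
proof -
  have "K_linear K (F V) (F U) (res V U)"
    using assms(1-4) unfolding T_presheaf_def by simp
  then show ?thesis
    using assms(5) unfolding K_linear_def by simp
qed

lemma T_presheaf_res_id:
  assumes "T_presheaf T K F res" "U \<in> T" "s \<in> carrier (F U)"
  shows "res U U s = s"
  using assms unfolding T_presheaf_def by simp

lemma T_presheaf_res_trans:
  assumes "T_presheaf T K F res" "U \<in> T" "V \<in> T" "W \<in> T" "U \<subseteq> V" "V \<subseteq> W"
    and "s \<in> carrier (F W)"
  shows "res V U (res W V s) = res W U s"
  using assms unfolding T_presheaf_def by simp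

lemma T_sheaf_presheaf: "T_sheaf T K F res \<Longrightarrow> T_presheaf T K F res"
  unfolding T_sheaf_def by simp

lemma mem_Gamma_loc_ambient_iff:
  assumes "\<forall>V\<in>T. V \<subseteq> S"
  shows "g \<in> Gamma_loc T F res S \<longleftrightarrow>
    (\<forall>V\<in>T. g V \<in> carrier (F V)) \<and> (\<forall>V\<in>T. \<forall>V'\<in>T. V \<subseteq> V' \<longrightarrow> res V' V (g V') = g V)"
proof -
  have "\<And>V. V \<in> T \<Longrightarrow> S \<inter> V = V"
    using assms by blast
  then show ?thesis
    unfolding Gamma_loc_def by simp
qed

lemma Gamma_locD:
  assumes "f \<in> Gamma_loc T F res U" "V \<in> T"
  shows Gamma_loc_carrier: "f V \<in> carrier (F (U \<inter> V))"
    and Gamma_loc_res: "V' \<in> T \<Longrightarrow> V' \<subseteq> V \<Longrightarrow> res (U \<inter> V) (U \<inter> V') (f V) = f V'"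
  using assms unfolding Gamma_loc_def by simp_all

lemma T_sheaf_glue_pair:
  assumes sheaf: "T_sheaf T K F res" and AB: "A \<in> T" "B \<in> T" "A \<union> B \<in> T"
    and ab: "a \<in> carrier (F A)" "b \<in> carrier (F B)" "res A (A \<inter> B) a = res B (A \<inter> B) b"
  obtains t where "t \<in> carrier (F (A \<union> B))" "res (A \<union> B) A t = a" "res (A \<union> B) B t = b"
proof -
  define h where "h W = (if W = A then a else b)" for W
  have "h B = b"
  proof (cases "B = A")
    case True
    with ab T_presheaf_res_id[OF T_sheaf_presheaf[OF sheaf] AB(1)] show ?thesis
      by (simp add: h_def)
  qed (simp add: h_def)
  have "T_covering T {A, B} (A \<union> B)"
    using AB unfolding T_covering_def by blast
  moreover have "\<forall>W\<in>{A, B}. h W \<in> carrier (F W)"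
    using ab by (auto simp: h_def)
  moreover have "\<forall>W1\<in>{A, B}. \<forall>W2\<in>{A, B}. res W1 (W1 \<inter> W2) (h W1) = res W2 (W1 \<inter> W2) (h W2)"
    using ab(3) by (auto simp: h_def Int_commute)
  ultimately obtain t where "t \<in> carrier (F (A \<union> B))" "\<forall>W\<in>{A, B}. res (A \<union> B) W t = h W"
    using sheaf AB(3) unfolding T_sheaf_def by blast
  with \<open>h B = b\<close> show thesis
    by (intro that) (auto simp: h_def)
qed

lemma T_flabby_lift:
  assumes "T_flabby T F res" "U \<in> T" "V \<in> T" "U \<subseteq> V" "t \<in> carrier (F U)"
  obtains s where "s \<in> carrier (F V)" "res V U s = t"
  using assms unfolding T_flabby_def by (metis imageE)

lemma T_flabby_sheaf_extend_pair:
  assumes sheaf: "T_sheaf T K F res" and flabby: "T_flabby T F res"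
    and T: "A \<in> T" "C \<in> T" "B \<in> T" "A \<union> C \<in> T" and sub: "A \<subseteq> B" "C \<subseteq> B"
    and ac: "a \<in> carrier (F A)" "c \<in> carrier (F C)" "res A (A \<inter> C) a = res C (A \<inter> C) c"
  obtains y where "y \<in> carrier (F B)" "res B A y = a" "res B C y = c"
proof -
  have pre: "T_presheaf T K F res"
    using sheaf by (rule T_sheaf_presheaf)
  obtain t where t: "t \<in> carrier (F (A \<union> C))" "res (A \<union> C) A t = a" "res (A \<union> C) C t = c"
    using T_sheaf_glue_pair[OF sheaf T(1,2,4) ac] .
  obtain y where y: "y \<in> carrier (F B)" "res B (A \<union> C) y = t"
    using T_flabby_lift[OF flabby T(4,3) _ t(1)] sub by blast
  show thesis
  proof
    show "res B A y = a"
      using T_presheaf_res_trans[OF pre T(1,4,3) _ _ y(1)] sub y(2) t(2) by auto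
    show "res B C y = c"
      using T_presheaf_res_trans[OF pre T(2,4,3) _ _ y(1)] sub y(2) t(3) by auto
  qed (fact y(1))
qed

definition T_exhaustion :: "'a set set \<Rightarrow> (nat \<Rightarrow> 'a set) \<Rightarrow> bool" where
  "T_exhaustion T W \<longleftrightarrow> (\<forall>n. W n \<in> T) \<and> incseq W \<and> (\<forall>V\<in>T. \<exists>n. V \<subseteq> W n)"

lemma T_exhaustionD:
  assumes "T_exhaustion T W"
  shows T_exhaustion_in: "W n \<in> T"
    and T_exhaustion_mono: "m \<le> n \<Longrightarrow> W m \<subseteq> W n"
    and T_exhaustion_cover: "V \<in> T \<Longrightarrow> \<exists>n. V \<subseteq> W n"
  using assms unfolding T_exhaustion_def by (simp_all add: monoD)

lemma T_exhaustion_partial_unions: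
  assumes V: "\<forall>n. V n \<in> T" and union: "\<forall>A\<in>T. \<forall>B\<in>T. A \<union> B \<in> T"
    and cover: "\<forall>W\<in>T. \<exists>I. finite I \<and> W \<subseteq> (\<Union>n\<in>I. V n)"
  shows "T_exhaustion T (\<lambda>n. \<Union>i\<le>n. V i)"
  unfolding T_exhaustion_def
proof (intro conjI allI ballI)
  show "(\<Union>i\<le>n. V i) \<in> T" for n
  proof (induction n)
    case 0
    show ?case
      using V by simp
  next
    case (Suc n)
    have "(\<Union>i\<le>Suc n. V i) = V (Suc n) \<union> (\<Union>i\<le>n. V i)"
      by (simp add: atMost_Suc)
    then show ?case
      using union V Suc.IH by metis
  qed
  show "incseq (\<lambda>n. \<Union>i\<le>n. V i)"
    by (intro monoI UN_mono) auto
  fix W assume "W \<in> T"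
  obtain I where "finite I" "W \<subseteq> (\<Union>n\<in>I. V n)"
    using bspec[OF cover \<open>W \<in> T\<close>] by (elim exE conjE)
  moreover obtain k where "\<forall>i\<in>I. i \<le> k"
    using \<open>finite I\<close> finite_nat_set_iff_bounded_le by blast
  ultimately show "\<exists>k. W \<subseteq> (\<Union>i\<le>k. V i)"
    by (intro exI[of _ k]) blast
qed

lemma compatible_sequence_res:
  assumes pre: "T_presheaf T K F res" and W: "T_exhaustion T W"
    and s: "\<forall>n. s n \<in> carrier (F (W n))" "\<forall>n. res (W (Suc n)) (W n) (s (Suc n)) = s n"
    and "m \<le> n"
  shows "res (W n) (W m) (s n) = s m"
  using \<open>m \<le> n\<close>
proof (induction n rule: dec_induct)
  case base
  show ?case
    using T_presheaf_res_id[OF pre T_exhaustion_in[OF W]] s(1) by blast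
next
  case (step n)
  note WT = T_exhaustion_in[OF W] and mono = T_exhaustion_mono[OF W]
  have "res (W (Suc n)) (W m) (s (Suc n)) = res (W n) (W m) (res (W (Suc n)) (W n) (s (Suc n)))"
    using T_presheaf_res_trans[OF pre WT WT WT mono[OF step(1)] mono s(1)[rule_format]] by simp
  also have "\<dots> = s m"
    using s(2) step.IH by simp
  finally show ?case .
qed

lemma compatible_sequence_section:
  assumes pre: "T_presheaf T K F res" and W: "T_exhaustion T W"
    and s: "\<forall>n. s n \<in> carrier (F (W n))" "\<forall>n. res (W (Suc n)) (W n) (s (Suc n)) = s n"
  obtains g where "\<forall>V\<in>T. g V \<in> carrier (F V)"
    and "\<forall>V\<in>T. \<forall>V'\<in>T. V \<subseteq> V' \<longrightarrow> res V' V (g V') = g V"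
    and "\<And>V n. V \<in> T \<Longrightarrow> V \<subseteq> W n \<Longrightarrow> g V = res (W n) V (s n)"
proof -
  note WT = T_exhaustion_in[OF W] and mono = T_exhaustion_mono[OF W]
    and cover = T_exhaustion_cover[OF W]
  have indep: "res (W n) V (s n) = res (W m) V (s m)"
    if "V \<in> T" "V \<subseteq> W m" "m \<le> n" for V m n
    using T_presheaf_res_trans[OF pre \<open>V \<in> T\<close> WT WT \<open>V \<subseteq> W m\<close> mono[OF \<open>m \<le> n\<close>] s(1)[rule_format]]
      compatible_sequence_res[OF pre W s \<open>m \<le> n\<close>] by simp
  define N where "N V = (LEAST n. V \<subseteq> W n)" for V
  define g where "g V = res (W (N V)) V (s (N V))" for V
  have g: "g V = res (W n) V (s n)" if "V \<in> T" "V \<subseteq> W n" for V n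
  proof -
    have "V \<subseteq> W (N V)"
      unfolding N_def by (rule LeastI) (rule \<open>V \<subseteq> W n\<close>)
    moreover have "N V \<le> n"
      unfolding N_def by (rule Least_le) (rule \<open>V \<subseteq> W n\<close>)
    ultimately show ?thesis
      unfolding g_def by (rule indep[OF \<open>V \<in> T\<close>, symmetric])
  qed
  show thesis
  proof (rule that)
    show "\<forall>V\<in>T. g V \<in> carrier (F V)"
    proof
      fix V assume "V \<in> T"
      obtain n where n: "V \<subseteq> W n"
        using cover[OF \<open>V \<in> T\<close>] ..
      show "g V \<in> carrier (F V)"
        unfolding g[OF \<open>V \<in> T\<close> n]
        by (rule T_presheaf_res_carrier[OF pre \<open>V \<in> T\<close> WT n s(1)[rule_format]])
    qed
    show "\<forall>V\<in>T. \<forall>V'\<in>T. V \<subseteq> V' \<longrightarrow> res V' V (g V') = g V"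
    proof (intro ballI impI)
      fix V V' assume V: "V \<in> T" "V' \<in> T" "V \<subseteq> V'"
      obtain n where n: "V' \<subseteq> W n"
        using cover[OF \<open>V' \<in> T\<close>] ..
      have "res V' V (g V') = res V' V (res (W n) V' (s n))"
        using g[OF \<open>V' \<in> T\<close> n] by simp
      also have "\<dots> = res (W n) V (s n)"
        by (rule T_presheaf_res_trans[OF pre V(1,2) WT V(3) n s(1)[rule_format]])
      also have "\<dots> = g V"
        by (rule g[symmetric, OF \<open>V \<in> T\<close> order_trans[OF \<open>V \<subseteq> V'\<close> n]])
      finally show "res V' V (g V') = g V" .
    qed
    show "g V = res (W n) V (s n)" if "V \<in> T" "V \<subseteq> W n" for V n
      using g that .
  qed
qed

lemma T_flabby_sequence_over_exhaustion:
  assumes sheaf: "T_sheaf T K F res" and flabby: "T_flabby T F res"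
    and union: "\<forall>A\<in>T. \<forall>B\<in>T. A \<union> B \<in> T" and W: "T_exhaustion T W"
    and U: "\<forall>V\<in>T. U \<inter> V \<in> T" and f: "f \<in> Gamma_loc T F res U"
  obtains s where "\<forall>n. s n \<in> carrier (F (W n))"
    and "\<forall>n. res (W (Suc n)) (W n) (s (Suc n)) = s n"
    and "\<forall>n. res (W n) (U \<inter> W n) (s n) = f (W n)"
proof -
  note WT = T_exhaustion_in[OF W]
  have mono: "\<And>n. W n \<subseteq> W (Suc n)"
    using T_exhaustion_mono[OF W] by simp
  note fC = Gamma_loc_carrier[OF f]
  have UT: "\<And>V. V \<in> T \<Longrightarrow> U \<inter> V \<in> T"
    using U by simp
  define P where "P n x \<longleftrightarrow> x \<in> carrier (F (W n)) \<and> res (W n) (U \<inter> W n) x = f (W n)" for n x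
  obtain x where "x \<in> carrier (F (W 0))" "res (W 0) (U \<inter> W 0) x = f (W 0)"
    using T_flabby_lift[OF flabby UT[OF WT] WT Int_lower2 fC[OF WT]] .
  then have "\<exists>x. P 0 x"
    unfolding P_def by blast
  moreover have "\<exists>y. P (Suc n) y \<and> res (W (Suc n)) (W n) y = x" if "P n x" for n x
  proof -
    let ?C = "U \<inter> W (Suc n)"
    have x: "x \<in> carrier (F (W n))" "res (W n) (U \<inter> W n) x = f (W n)"
      using \<open>P n x\<close> unfolding P_def by simp_all
    have C: "?C \<in> T" "W n \<union> ?C \<in> T"
      using UT[OF WT] union WT by simp_all
    have "W n \<inter> ?C = U \<inter> W n"
      using mono[of n] by blast
    then have "res (W n) (W n \<inter> ?C) x = res ?C (W n \<inter> ?C) (f (W (Suc n)))"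
      using x(2) Gamma_loc_res[OF f WT WT mono[of n]] by simp
    then obtain y where "y \<in> carrier (F (W (Suc n)))" "res (W (Suc n)) (W n) y = x"
      "res (W (Suc n)) ?C y = f (W (Suc n))"
      by (rule T_flabby_sheaf_extend_pair[OF sheaf flabby WT C(1) WT C(2) mono[of n] Int_lower2
            x(1) fC[OF WT]])
    then show ?thesis
      unfolding P_def by blast
  qed
  ultimately obtain s where "\<forall>n. P n (s n) \<and> res (W (Suc n)) (W n) (s (Suc n)) = s n"
    using dependent_nat_choice[of P "\<lambda>n x y. res (W (Suc n)) (W n) y = x"] by blast
  then show thesis
    by (intro that[of s]) (simp_all add: P_def)
qed

lemma T_flabby_imp_Gamma_res_surj:
  assumes sheaf: "T_sheaf T K F res" and flabby: "T_flabby T F res"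
    and union: "\<forall>A\<in>T. \<forall>B\<in>T. A \<union> B \<in> T" and W: "T_exhaustion T W"
    and S: "\<forall>V\<in>T. V \<subseteq> S" and U: "\<forall>V\<in>T. U \<inter> V \<in> T"
  shows "Gamma_res_surj T F res S U"
  unfolding Gamma_res_surj_def
proof
  fix f assume f: "f \<in> Gamma_loc T F res U"
  have pre: "T_presheaf T K F res"
    using sheaf by (rule T_sheaf_presheaf)
  note WT = T_exhaustion_in[OF W] and cover = T_exhaustion_cover[OF W]
  obtain s where s: "\<forall>n. s n \<in> carrier (F (W n))"
    "\<forall>n. res (W (Suc n)) (W n) (s (Suc n)) = s n"
    and sf: "\<forall>n. res (W n) (U \<inter> W n) (s n) = f (W n)"
    using T_flabby_sequence_over_exhaustion[OF sheaf flabby union W U f] by blast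
  obtain g where gC: "\<forall>V\<in>T. g V \<in> carrier (F V)"
    and gcomp: "\<forall>V\<in>T. \<forall>V'\<in>T. V \<subseteq> V' \<longrightarrow> res V' V (g V') = g V"
    and gs: "\<And>V n. V \<in> T \<Longrightarrow> V \<subseteq> W n \<Longrightarrow> g V = res (W n) V (s n)"
    using compatible_sequence_section[OF pre W s] by blast
  have restr: "res V (U \<inter> V) (g V) = f V" if "V \<in> T" for V
  proof -
    obtain n where n: "V \<subseteq> W n"
      using cover[OF \<open>V \<in> T\<close>] ..
    have UV: "U \<inter> V \<in> T" "U \<inter> W n \<in> T" "U \<inter> V \<subseteq> U \<inter> W n"
      using U \<open>V \<in> T\<close> WT n by blast+
    have "res V (U \<inter> V) (g V) = res V (U \<inter> V) (res (W n) V (s n))"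
      using gs[OF \<open>V \<in> T\<close> n] by simp
    also have "\<dots> = res (W n) (U \<inter> V) (s n)"
      by (rule T_presheaf_res_trans[OF pre UV(1) \<open>V \<in> T\<close> WT Int_lower2 n s(1)[rule_format]])
    also have "\<dots> = res (U \<inter> W n) (U \<inter> V) (res (W n) (U \<inter> W n) (s n))"
      by (rule T_presheaf_res_trans[OF pre UV(1,2) WT UV(3) Int_lower2 s(1)[rule_format], symmetric])
    also have "\<dots> = res (U \<inter> W n) (U \<inter> V) (f (W n))"
      using sf by simp
    also have "\<dots> = f V"
      by (rule Gamma_loc_res[OF f WT \<open>V \<in> T\<close> n])
    finally show ?thesis .
  qed
  show "\<exists>g\<in>Gamma_loc T F res S. \<forall>V\<in>T. res (S \<inter> V) (U \<inter> V) (g V) = f V"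
  proof (intro bexI ballI)
    fix V assume "V \<in> T"
    then have "S \<inter> V = V"
      using S by blast
    with restr[OF \<open>V \<in> T\<close>] show "res (S \<inter> V) (U \<inter> V) (g V) = f V"
      by simp
  next
    show "g \<in> Gamma_loc T F res S"
      using mem_Gamma_loc_ambient_iff[OF S] gC gcomp by blast
  qed
qed

lemma Gamma_res_surj_imp_T_flabby:
  assumes pre: "T_presheaf T K F res" and inter: "\<forall>A\<in>T. \<forall>B\<in>T. A \<inter> B \<in> T"
    and S: "\<forall>V\<in>T. V \<subseteq> S" and surj: "\<forall>U\<in>T. Gamma_res_surj T F res S U"
  shows "T_flabby T F res"
  unfolding T_flabby_def
proof (intro ballI impI equalityI subsetI)
  fix U V assume UV: "U \<in> T" "V \<in> T" "U \<subseteq> V"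
  show "x \<in> carrier (F U)" if "x \<in> res V U ` carrier (F V)" for x
    using that T_presheaf_res_carrier[OF pre UV] by blast
  fix t assume t: "t \<in> carrier (F U)"
  define f where "f W = res U (U \<inter> W) t" for W
  have "f \<in> Gamma_loc T F res U"
    unfolding Gamma_loc_def
  proof (intro CollectI conjI ballI impI)
    fix W assume "W \<in> T"
    then show "f W \<in> carrier (F (U \<inter> W))"
      unfolding f_def using T_presheaf_res_carrier[OF pre _ UV(1) Int_lower1 t] inter UV(1) by blast
  next
    fix W W' assume W: "W \<in> T" "W' \<in> T" "W \<subseteq> W'"
    then have "U \<inter> W \<in> T" "U \<inter> W' \<in> T" "U \<inter> W \<subseteq> U \<inter> W'"
      using inter UV(1) by blast+
    then show "res (U \<inter> W') (U \<inter> W) (f W') = f W"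
      unfolding f_def by (rule T_presheaf_res_trans[OF pre _ _ UV(1) _ Int_lower1 t])
  qed
  then obtain g where g: "g \<in> Gamma_loc T F res S" "\<forall>W\<in>T. res (S \<inter> W) (U \<inter> W) (g W) = f W"
    using surj UV(1) unfolding Gamma_res_surj_def by blast
  have "S \<inter> V = V" "U \<inter> V = U"
    using S UV by blast+
  then have "g V \<in> carrier (F V)" "res V U (g V) = res U U t"
    using Gamma_loc_carrier[OF g(1) UV(2)] bspec[OF g(2) UV(2)] by (simp_all add: f_def)
  then show "t \<in> res V U ` carrier (F V)"
    using T_presheaf_res_id[OF pre UV(1) t] by auto
qed

theorem mainTheorem19:
  fixes X :: "'a topology" and T :: "'a set set"
    and K :: "'k ring"
    and F :: "'a set \<Rightarrow> ('k, 'v) module" and res :: "'a set \<Rightarrow> 'a set \<Rightarrow> 'v \<Rightarrow> 'v"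
    and Vn :: "nat \<Rightarrow> 'a set"
  assumes "field K"
    and "T_space X T"
    and "\<forall>n. Vn n \<in> T"
    and "\<forall>W\<in>T. \<exists>I. finite I \<and> W \<subseteq> (\<Union>n\<in>I. Vn n)"
    and "T_sheaf T K F res"
  shows "T_flabby T F res \<longleftrightarrow>
           (\<forall>U\<in>T_loc X T. Gamma_res_surj T F res (topspace X) U)"
proof -
  have "\<forall>U\<in>T. openin X U" and union: "\<forall>A\<in>T. \<forall>B\<in>T. A \<union> B \<in> T"
    and inter: "\<forall>A\<in>T. \<forall>B\<in>T. A \<inter> B \<in> T"
    using \<open>T_space X T\<close> unfolding T_space_def by blast+
  then have S: "\<forall>V\<in>T. V \<subseteq> topspace X" and "T \<subseteq> T_loc X T"
    unfolding T_loc_def by (auto simp: openin_subset)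
  have W: "T_exhaustion T (\<lambda>n. \<Union>i\<le>n. Vn i)"
    by (rule T_exhaustion_partial_unions[OF assms(3) union assms(4)])
  have pre: "T_presheaf T K F res"
    using \<open>T_sheaf T K F res\<close> by (rule T_sheaf_presheaf)
  show ?thesis
  proof
    assume "T_flabby T F res"
    then show "\<forall>U\<in>T_loc X T. Gamma_res_surj T F res (topspace X) U"
      using T_flabby_imp_Gamma_res_surj[OF \<open>T_sheaf T K F res\<close> _ union W S]
      unfolding T_loc_def by blast
  next
    assume "\<forall>U\<in>T_loc X T. Gamma_res_surj T F res (topspace X) U"
    then show "T_flabby T F res"
      using Gamma_res_surj_imp_T_flabby[OF pre inter S] \<open>T \<subseteq> T_loc X T\<close> by blast
  qed
qed

end
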